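(* Let $\mathcal{F}=(A,R)$ and $\mathcal{G}=(A,R')$ be argumentation frameworks with $R\subseteq R'$ and $\mathrm{conf}(\mathcal{F})=\mathrm{conf}(\mathcal{G})$, and let $S\in\mathit{cf1.5}(\mathcal{F})$. Then $S\in\mathit{cf1.5}(\mathcal{G})$. In particular, $\mathit{cf1.5}$ is both $\preceq^E_\cap$-skepticism adequate and $\preceq^E_W$-skepticism adequate.
   Context: An argumentation framework (AF) is $\mathcal{F}=(A_{\mathcal{F}},R_{\mathcal{F}})$ with $R_{\mathcal{F}}\subseteq A_{\mathcal{F}}\times A_{\mathcal{F}}$ (possibly infinite); $a\rightarrow b$ means $(a,b)\in R_{\mathcal{F}}$. $\mathrm{conf}(\mathcal{F})=\{(x,y):(x,y)\in R_{\mathcal{F}}\text{ or }(y,x)\in R_{\mathcal{F}}\}$. $\tau_1\preceq^E_\cap\tau_2$ iff $\bigcap_{S_1\in\tau_1}S_1\subseteq\bigcap_{S_2\in\tau_2}S_2$; $\tau_1\preceq^E_W\tau_2$ iff for every $S_2\in\tau_2$ there is $S_1\in\tau_1$ with $S_1\subseteq S_2$. A semantics $\sigma$ is $\preceq$-skepticism adequate if for any AFs $\mathcal{F},\mathcal{G}$ on the same argument set with $R_{\mathcal{F}}\supseteq R_{\mathcal{G}}$ and $\mathrm{conf}(\mathcal{F})=\mathrm{conf}(\mathcal{G})$, $\sigma(\mathcal{F})\preceq\sigma(\mathcal{G})$. $\mathcal{F}|_B=(A_{\mathcal{F}}\cap B,R_{\mathcal{F}}\cap(B\times B))$. Conflict-free: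 no $a,b\in S$ with $a\rightarrow b$; naive: $\subseteq$-maximal conflict-free. $\mathrm{SCC}(\mathcal{F})$: strongly connected components of the attack graph. $D_S(X)=\{b\in X:\exists a\in S\setminus X,\ a\rightarrow b\}$ (attacks taken in the framework under consideration). $S\in\mathit{cf1.5}(\mathcal{F})$ iff $S$ is conflict-free and for each $X\in\mathrm{SCC}(\mathcal{F})$, $S\cap X$ is a naive extension of $\mathcal{F}|_{X\setminus D_S(X)}$. *)

theory Defs
  imports Main
begin

definition AF :: "'a set \<Rightarrow> ('a \<times> 'a) set \<Rightarrow> bool" where
  "AF A R \<longleftrightarrow> R \<subseteq> A \<times> A"

definition conf :: "('a \<times> 'a) set \<Rightarrow> ('a \<times> 'a) set" where
  "conf R = {(x, y). (x, y) \<in> R \<or> (y, x) \<in> R}"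

definition restr_args :: "'a set \<Rightarrow> 'a set \<Rightarrow> 'a set" where
  "restr_args A B = A \<inter> B"

definition restr_att :: "('a \<times> 'a) set \<Rightarrow> 'a set \<Rightarrow> ('a \<times> 'a) set" where
  "restr_att R B = R \<inter> (B \<times> B)"

definition conflict_free :: "'a set \<Rightarrow> ('a \<times> 'a) set \<Rightarrow> 'a set \<Rightarrow> bool" where
  "conflict_free A R S \<longleftrightarrow> S \<subseteq> A \<and> (\<forall>a\<in>S. \<forall>b\<in>S. (a, b) \<notin> R)"

definition naive :: "'a set \<Rightarrow> ('a \<times> 'a) set \<Rightarrow> 'a set \<Rightarrow> bool" where
  "naive A R S \<longleftrightarrow> conflict_free A R S \<and>
     (\<forall>T. conflict_free A R T \<and> S \<subseteq> T \<longrightarrow> T = S)"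

definition SCCs :: "'a set \<Rightarrow> ('a \<times> 'a) set \<Rightarrow> 'a set set" where
  "SCCs A R = {{b \<in> A. (a, b) \<in> R\<^sup>* \<and> (b, a) \<in> R\<^sup>*} | a. a \<in> A}"

definition D :: "('a \<times> 'a) set \<Rightarrow> 'a set \<Rightarrow> 'a set \<Rightarrow> 'a set" where
  "D R S X = {b \<in> X. \<exists>a \<in> S - X. (a, b) \<in> R}"

definition cf15 :: "'a set \<Rightarrow> ('a \<times> 'a) set \<Rightarrow> 'a set set" where
  "cf15 A R = {S. conflict_free A R S \<and>
     (\<forall>X \<in> SCCs A R. naive (restr_args A (X - D R S X)) (restr_att R (X - D R S X)) (S \<inter> X))}"

definition le_cap :: "'a set set \<Rightarrow> 'a set set \<Rightarrow> bool" where
  "le_cap \<tau>1 \<tau>2 \<longleftrightarrow> \<Inter>\<tau>1 \<subseteq> \<Inter>\<tau>2"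

definition le_W :: "'a set set \<Rightarrow> 'a set set \<Rightarrow> bool" where
  "le_W \<tau>1 \<tau>2 \<longleftrightarrow> (\<forall>S2\<in>\<tau>2. \<exists>S1\<in>\<tau>1. S1 \<subseteq> S2)"

definition skepticism_adequate ::
  "('a set set \<Rightarrow> 'a set set \<Rightarrow> bool) \<Rightarrow> ('a set \<Rightarrow> ('a \<times> 'a) set \<Rightarrow> 'a set set) \<Rightarrow> bool" where
  "skepticism_adequate le \<sigma> \<longleftrightarrow>
     (\<forall>A RF RG. AF A RF \<and> AF A RG \<and> RG \<subseteq> RF \<and> conf RF = conf RG \<longrightarrow>
        le (\<sigma> A RF) (\<sigma> A RG))"

end

theory Submission
  imports Defs
begin

text \<open>Conflict-freeness and naivety only depend on the symmetric relation conf R, so they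
are the same for R and R'. Adding attack directions can only merge strongly connected
components, so every SCC X' of R' is a union of SCCs of R. Let b be an argument of X' that
is not attacked from S outside X' and not in S. If b is attacked in R by S from outside its
R-SCC X, the attacker lies in X' and conflicts with b; otherwise b survives in the
restriction to X, where naivety of S \<inter> X gives a conflict of b with S \<inter> X \<subseteq> S \<inter> X'.
Hence S \<inter> X' is naive in the restriction to X' with respect to R'.\<close>

lemma conflict_free_iff_conf:
  "conflict_free A R S \<longleftrightarrow> S \<subseteq> A \<and> (\<forall>a\<in>S. \<forall>b\<in>S. (a, b) \<notin> conf R)"
  unfolding conflict_free_def conf_def by blast

lemma naive_iff_conf:
  "naive A R S \<longleftrightarrow> conflict_free A R S \<and> (\<forall>b\<in>A - S. \<exists>s\<in>insert b S. (b, s) \<in> conf R)"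
proof
  assume naive: "naive A R S"
  have "\<exists>s\<in>insert b S. (b, s) \<in> conf R" if b: "b \<in> A - S" for b
  proof (rule ccontr)
    assume "\<not> ?thesis"
    with b naive have "conflict_free A R (insert b S)"
      unfolding naive_def conflict_free_iff_conf conf_def by blast
    with naive b show False
      unfolding naive_def by blast
  qed
  with naive show "conflict_free A R S \<and> (\<forall>b\<in>A - S. \<exists>s\<in>insert b S. (b, s) \<in> conf R)"
    unfolding naive_def by blast
next
  assume "conflict_free A R S \<and> (\<forall>b\<in>A - S. \<exists>s\<in>insert b S. (b, s) \<in> conf R)"
  then show "naive A R S"
    unfolding naive_def conflict_free_iff_conf by blast
qed

lemma naive_restr_iff:
  "naive (restr_args A B) (restr_att R B) S \<longleftrightarrow>
     S \<subseteq> B \<and> conflict_free A R S \<and> (\<forall>b\<in>A \<inter> B - S. \<exists>s\<in>insert b S. (b, s) \<in> conf R)"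
  unfolding naive_iff_conf conflict_free_iff_conf conf_def restr_args_def restr_att_def
  by blast

lemma D_disjoint_conflict_free: "conflict_free A R S \<Longrightarrow> S \<inter> D R S X = {}"
  unfolding conflict_free_def D_def by blast

lemma SCCs_refine:
  assumes "R \<subseteq> R'" and "X' \<in> SCCs A R'" and "b \<in> X'"
  obtains X where "X \<in> SCCs A R" and "b \<in> X" and "X \<subseteq> X'"
proof
  obtain a where X': "X' = {c \<in> A. (a, c) \<in> R'\<^sup>* \<and> (c, a) \<in> R'\<^sup>*}"
    using assms(2) unfolding SCCs_def by blast
  define X where "X = {c \<in> A. (b, c) \<in> R\<^sup>* \<and> (c, b) \<in> R\<^sup>*}"
  show "b \<in> X" and "X \<in> SCCs A R"
    using assms(3) X' unfolding X_def SCCs_def by auto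
  have "R\<^sup>* \<subseteq> R'\<^sup>*"
    using assms(1) by (rule rtrancl_mono)
  with assms(3) X' show "X \<subseteq> X'"
    unfolding X_def by (auto intro: rtrancl_trans)
qed

lemma cf15_mono:
  assumes "R \<subseteq> R'" and "conf R = conf R'"
  shows "cf15 A R \<subseteq> cf15 A R'"
proof
  fix S assume "S \<in> cf15 A R"
  then have cf: "conflict_free A R S"
    and naive: "\<And>X. X \<in> SCCs A R \<Longrightarrow> naive (restr_args A (X - D R S X)) (restr_att R (X - D R S X)) (S \<inter> X)"
    unfolding cf15_def by auto
  have cf': "conflict_free A R' S"
    using cf assms(2) unfolding conflict_free_iff_conf by simp
  have "naive (restr_args A (X' - D R' S X')) (restr_att R' (X' - D R' S X')) (S \<inter> X')"
    if X': "X' \<in> SCCs A R'" for X'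
  proof -
    have "\<exists>s\<in>insert b (S \<inter> X'). (b, s) \<in> conf R"
      if b: "b \<in> A \<inter> (X' - D R' S X') - S \<inter> X'" for b
    proof -
      obtain X where X: "X \<in> SCCs A R" "b \<in> X" "X \<subseteq> X'"
        using SCCs_refine[OF assms(1) X'] b by blast
      show ?thesis
      proof (cases "b \<in> D R S X")
        case True
        then obtain a where a: "a \<in> S" "(a, b) \<in> R"
          unfolding D_def by blast
        with b assms(1) have "a \<in> X'"
          unfolding D_def by blast
        with a show ?thesis
          unfolding conf_def by blast
      next
        case False
        with b X naive[OF X(1)] obtain s where "s \<in> insert b (S \<inter> X)" "(b, s) \<in> conf R"
          unfolding naive_restr_iff by blast
        with X(3) show ?thesis by blast
      qed
    qed
    moreover have "S \<inter> X' \<subseteq> X' - D R' S X'"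
      using D_disjoint_conflict_free[OF cf'] by blast
    moreover have "conflict_free A R' (S \<inter> X')"
      using cf' unfolding conflict_free_def by blast
    ultimately show ?thesis
      unfolding naive_restr_iff assms(2) by blast
  qed
  with cf' show "S \<in> cf15 A R'"
    unfolding cf15_def by blast
qed

lemma skepticism_adequate_if_mono:
  assumes le: "\<And>\<tau>1 \<tau>2. \<tau>2 \<subseteq> \<tau>1 \<Longrightarrow> le \<tau>1 \<tau>2"
    and mono: "\<And>A RF RG. RG \<subseteq> RF \<Longrightarrow> conf RF = conf RG \<Longrightarrow> \<sigma> A RG \<subseteq> \<sigma> A RF"
  shows "skepticism_adequate le \<sigma>"
  unfolding skepticism_adequate_def using le mono by auto

lemma le_cap_if_superset: "\<tau>2 \<subseteq> \<tau>1 \<Longrightarrow> le_cap \<tau>1 \<tau>2"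
  unfolding le_cap_def by blast

lemma le_W_if_superset: "\<tau>2 \<subseteq> \<tau>1 \<Longrightarrow> le_W \<tau>1 \<tau>2"
  unfolding le_W_def by blast

theorem theorem16:
  fixes A :: "'a set" and R R' :: "('a \<times> 'a) set" and S :: "'a set"
  assumes "AF A R" and "AF A R'"
    and "R \<subseteq> R'" and "conf R = conf R'"
    and "S \<in> cf15 A R"
  shows "S \<in> cf15 A R' \<and> skepticism_adequate le_cap (cf15 :: 'a set \<Rightarrow> _)
         \<and> skepticism_adequate le_W (cf15 :: 'a set \<Rightarrow> _)"
proof (intro conjI)
  show "S \<in> cf15 A R'"
    using cf15_mono[OF assms(3,4)] assms(5) by blast
  have mono: "\<And>A RF RG. RG \<subseteq> RF \<Longrightarrow> conf RF = conf RG \<Longrightarrow> cf15 A RG \<subseteq> cf15 (A :: 'a set) RF"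
    by (rule cf15_mono) simp_all
  show "skepticism_adequate le_cap (cf15 :: 'a set \<Rightarrow> _)"
    using le_cap_if_superset mono by (rule skepticism_adequate_if_mono)
  show "skepticism_adequate le_W (cf15 :: 'a set \<Rightarrow> _)"
    using le_W_if_superset mono by (rule skepticism_adequate_if_mono)
qed

end
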